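(* For sufficiently large $n$, every integer $k \ge 4\log_2 n+2$, and every tournament $T_k$ on $k$ vertices, Breaker has a winning strategy in the $(2:1)$ Maker–Breaker game $\mathcal{H}(T_k,n)$.
   Context: The game $\mathcal{H}(T_k,n)=(X,\mathcal{F}(T_k))$ has board $X=\{(u,v): u,v\in V(K_n),\ u\ne v\}$, the set of all $n(n-1)$ ordered pairs of distinct vertices. Its winning sets are $\mathcal{F}(T_k)=\{S\subseteq X : S \text{ is (the arc set of) a copy of } T_k\}$. In the $(2:1)$ Maker–Breaker game on $(X,\mathcal{F})$, the players alternately claim unclaimed elements of $X$, Maker claiming $2$ elements per round and Breaker $1$ element per round. Maker wins if she claims all elements of some winning set; otherwise Breaker wins. A tournament is a digraph with exactly one directed edge between each pair of distinct vertices. *)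

theory Defs
  imports Complex_Main
begin

definition tournament :: "nat \<Rightarrow> (nat \<times> nat) set \<Rightarrow> bool" where
  "tournament k T \<longleftrightarrow> T \<subseteq> {0..<k} \<times> {0..<k} \<and> (\<forall>a. (a, a) \<notin> T) \<and>
     (\<forall>a<k. \<forall>b<k. a \<noteq> b \<longrightarrow> ((a, b) \<in> T \<longleftrightarrow> (b, a) \<notin> T))"

text \<open>Board of H(T_k,n): ordered pairs of distinct vertices of K_n, with V(K_n) = {0..<n}.\<close>
definition board :: "nat \<Rightarrow> (nat \<times> nat) set" where
  "board n = {(u, v). u < n \<and> v < n \<and> u \<noteq> v}"

definition copies :: "nat \<Rightarrow> nat \<Rightarrow> (nat \<times> nat) set \<Rightarrow> (nat \<times> nat) set set" where
  "copies n k T = {(\<lambda>(a, b). (f a, f b)) ` T | f. inj_on f {0..<k} \<and> f ` {0..<k} \<subseteq> {0..<n}}"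

text \<open>(2:1) Maker-Breaker game on board X with winning sets F.
  breaker_wins X F M B: in the position where Maker owns M, Breaker owns B and it is
  Maker's turn, Breaker has a winning strategy. Maker claims 2 free elements (or all
  remaining ones if fewer than 2 are left), then Breaker claims 1 free element.
  Maker wins once she owns a winning set; Breaker wins if the board is exhausted
  otherwise.\<close>
inductive breaker_wins :: "'a set \<Rightarrow> 'a set set \<Rightarrow> 'a set \<Rightarrow> 'a set \<Rightarrow> bool"
  for X :: "'a set" and F :: "'a set set" where
  step: "(\<forall>A. A \<subseteq> X - (M \<union> B) \<and> card A = min 2 (card (X - (M \<union> B))) \<longrightarrow>
            (\<not> (\<exists>W\<in>F. W \<subseteq> M \<union> A)) \<and>
            (X - (M \<union> A \<union> B) = {} \<or>
             (\<exists>e \<in> X - (M \<union> A \<union> B). breaker_wins X F (M \<union> A) (insert e B))))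
         \<Longrightarrow> breaker_wins X F M B"

end

theory Submission
  imports Defs "HOL-Library.FuncSet"
begin

text \<open>An Erdos--Selfridge potential argument adapted to the bias (2:1). A winning set W that
  Breaker has not yet touched weighs \<open>sqrt 2 ^ (\<bar>W \<inter> M\<bar> - \<bar>W\<bar>)\<close>, where M is Maker's set.
  As \<open>sqrt 2 ^ j \<le> 1 + j / 2\<close> for \<open>j \<le> 2\<close>, Maker's two elements raise the total potential by
  at most half the sum of their degrees, while Breaker, taking an element of maximal degree,
  lowers it by that degree. Hence "potential plus any free degree is below 1" is invariant,
  whereas a set fully owned by Maker alone weighs 1. For \<open>\<H>(T\<^sub>k,n)\<close> there are at most
  \<open>n ^ k\<close> winning sets, each with \<open>k (k - 1) / 2\<close> elements, and \<open>2 n ^ k < 2 ^ (k (k - 1) / 4)\<close>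
  as soon as \<open>k \<ge> 4 log\<^sub>2 n + 2\<close>.\<close>

definition weight :: "'a set \<Rightarrow> 'a set \<Rightarrow> real" where
  "weight M W = sqrt 2 ^ card (W \<inter> M) / sqrt 2 ^ card W"

definition alive :: "'a set set \<Rightarrow> 'a set \<Rightarrow> 'a set set" where
  "alive F B = {W \<in> F. W \<inter> B = {}}"

definition potential :: "'a set set \<Rightarrow> 'a set \<Rightarrow> 'a set \<Rightarrow> real" where
  "potential F M B = (\<Sum>W\<in>alive F B. weight M W)"

definition degree :: "'a set set \<Rightarrow> 'a set \<Rightarrow> 'a set \<Rightarrow> 'a \<Rightarrow> real" where
  "degree F M B a = (\<Sum>W\<in>{W \<in> alive F B. a \<in> W}. weight M W)"

definition safe_position :: "'a set \<Rightarrow> 'a set set \<Rightarrow> 'a set \<Rightarrow> 'a set \<Rightarrow> bool" where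
  "safe_position X F M B \<longleftrightarrow>
     potential F M B < 1 \<and> (\<forall>a \<in> X - (M \<union> B). potential F M B + degree F M B a < 1)"

lemma weight_nonneg: "weight M W \<ge> 0"
  by (simp add: weight_def)

lemma degree_nonneg: "degree F M B a \<ge> 0"
  unfolding degree_def by (simp add: sum_nonneg weight_nonneg)

lemma weight_eq_1: "W \<subseteq> M \<Longrightarrow> weight M W = 1"
  by (simp add: weight_def Int_absorb2)

lemma weight_Un:
  assumes "A \<inter> M = {}" "finite W"
  shows "weight (M \<union> A) W = weight M W * sqrt 2 ^ card (W \<inter> A)"
proof -
  have "card (W \<inter> (M \<union> A)) = card (W \<inter> M) + card (W \<inter> A)"
    using assms by (subst card_Un_disjoint[symmetric]) (auto intro: arg_cong[where f = card])
  then show ?thesis by (simp add: weight_def power_add)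
qed

lemma sqrt2_power_le: "j \<le> 2 \<Longrightarrow> sqrt 2 ^ j \<le> 1 + real j / 2"
proof -
  assume "j \<le> 2"
  then have "j = 0 \<or> j = 1 \<or> j = 2" by auto
  moreover have "sqrt (2::real) \<le> 3/2" by (rule real_le_lsqrt) (auto simp: power2_eq_square)
  ultimately show ?thesis by auto
qed

lemma potential_ge_1_if_owned:
  assumes "finite F" "W \<in> F" "W \<inter> B = {}" "W \<subseteq> M"
  shows "potential F M B \<ge> 1"
proof -
  have "weight M W \<le> potential F M B"
    unfolding potential_def using assms
    by (intro member_le_sum) (auto simp: alive_def weight_nonneg)
  then show ?thesis using weight_eq_1[OF assms(4)] by simp
qed

lemma sum_degree:
  assumes "finite A" "finite F"
  shows "(\<Sum>a\<in>A. degree F M B a) = (\<Sum>W\<in>alive F B. weight M W * card (W \<inter> A))"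
proof -
  have "finite (alive F B)" using assms(2) by (simp add: alive_def)
  then have "(\<Sum>a\<in>A. degree F M B a) = (\<Sum>a\<in>A. \<Sum>W\<in>alive F B. if a \<in> W then weight M W else 0)"
    unfolding degree_def by (simp add: sum.inter_filter)
  also have "\<dots> = (\<Sum>W\<in>alive F B. \<Sum>a\<in>A. if a \<in> W then weight M W else 0)"
    by (rule sum.swap)
  also have "\<dots> = (\<Sum>W\<in>alive F B. weight M W * card (W \<inter> A))"
    using assms by (simp add: sum.If_cases Int_commute mult.commute)
  finally show ?thesis .
qed

lemma potential_maker_move:
  assumes "finite A" "card A \<le> 2" "A \<inter> M = {}" "finite F" "\<forall>W\<in>F. finite W"
  shows "potential F (M \<union> A) B \<le> potential F M B + (\<Sum>a\<in>A. degree F M B a) / 2"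
proof -
  have "potential F (M \<union> A) B = (\<Sum>W\<in>alive F B. weight M W * sqrt 2 ^ card (W \<inter> A))"
    unfolding potential_def using assms by (intro sum.cong refl weight_Un) (auto simp: alive_def)
  also have "\<dots> \<le> (\<Sum>W\<in>alive F B. weight M W + weight M W * card (W \<inter> A) / 2)"
  proof (rule sum_mono)
    fix W
    have "card (W \<inter> A) \<le> 2" using assms by (meson card_mono inf_le2 le_trans)
    from mult_left_mono[OF sqrt2_power_le[OF this] weight_nonneg]
    show "weight M W * sqrt 2 ^ card (W \<inter> A) \<le> weight M W + weight M W * card (W \<inter> A) / 2"
      by (simp add: algebra_simps)
  qed
  also have "\<dots> = potential F M B + (\<Sum>a\<in>A. degree F M B a) / 2"
    unfolding potential_def sum_degree[OF assms(1,4)] by (simp add: sum.distrib sum_divide_distrib)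
  finally show ?thesis .
qed

lemma potential_breaker_move:
  assumes "finite F"
  shows "potential F M (insert e B) = potential F M B - degree F M B e"
proof -
  have "alive F (insert e B) = alive F B - {W \<in> alive F B. e \<in> W}"
    by (auto simp: alive_def)
  moreover have "finite (alive F B)" using assms by (simp add: alive_def)
  ultimately show ?thesis
    unfolding potential_def degree_def by (simp add: sum_diff)
qed

lemma degree_breaker_move_le:
  assumes "finite F"
  shows "degree F M (insert e B) a \<le> degree F M B a"
  unfolding degree_def using assms
  by (intro sum_mono2) (auto simp: alive_def weight_nonneg)

lemma half_sum_lt_1:
  fixes d :: "'a \<Rightarrow> real"
  assumes "card A \<le> 2" "p < 1" "\<forall>a\<in>A. p + d a < 1"
  shows "p + sum d A / 2 < 1"
proof -
  consider "card A = 0" | "card A = 1" | "card A = 2" using assms(1) by linarith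
  then show ?thesis
  proof cases
    case 1
    then show ?thesis using assms(2) by (cases "finite A") auto
  next
    case 2
    then obtain a where "A = {a}" by (rule card_1_singletonE)
    then show ?thesis using assms(2,3) by simp
  next
    case 3
    then obtain a b where A: "A = {a, b}" "a \<noteq> b" by (meson card_2_iff)
    then have "p + d a < 1" "p + d b < 1" using assms(3) by auto
    then show ?thesis using A by (simp add: field_simps)
  qed
qed

lemma finite_family:
  assumes "finite X" "F \<subseteq> Pow X"
  shows "finite F" and "W \<in> F \<Longrightarrow> finite W"
  using assms by (meson finite_Pow_iff rev_finite_subset, meson PowD rev_finite_subset subsetD)

lemma maker_move_potential_lt_1:
  assumes "finite X" "F \<subseteq> Pow X"
    and "safe_position X F M B" "A \<subseteq> X - (M \<union> B)" "card A \<le> 2"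
  shows "potential F (M \<union> A) B < 1"
proof -
  have "finite A" using assms(1,4) by (meson finite_Diff rev_finite_subset)
  then have "potential F (M \<union> A) B \<le> potential F M B + (\<Sum>a\<in>A. degree F M B a) / 2"
    using assms(4,5) finite_family[OF assms(1,2)] by (intro potential_maker_move) auto
  also have "\<dots> < 1"
    using assms(3-5) by (intro half_sum_lt_1) (auto simp: safe_position_def)
  finally show ?thesis .
qed

lemma breaker_move_safe:
  assumes "finite F" "potential F M B < 1" "e \<in> X - (M \<union> B)"
    and e_max: "\<forall>a\<in>X - (M \<union> B). degree F M B a \<le> degree F M B e"
  shows "safe_position X F M (insert e B)"
  unfolding safe_position_def potential_breaker_move[OF assms(1)]
proof (intro conjI ballI)
  show "potential F M B - degree F M B e < 1"
    using assms(2) degree_nonneg[of F M B e] by linarith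
  fix a assume "a \<in> X - (M \<union> insert e B)"
  then have "degree F M B a \<le> degree F M B e" using e_max by blast
  then have "degree F M (insert e B) a \<le> degree F M B e"
    using degree_breaker_move_le[OF assms(1), of M e B a] by linarith
  then show "potential F M B - degree F M B e + degree F M (insert e B) a < 1"
    using assms(2) by linarith
qed

lemma breaker_wins_if_safe:
  assumes "finite X" "F \<subseteq> Pow X"
  shows "M \<inter> B = {} \<Longrightarrow> safe_position X F M B \<Longrightarrow> breaker_wins X F M B"
proof (induction "card (X - (M \<union> B))" arbitrary: M B rule: less_induct)
  case (less M B)
  note finite_F = finite_family(1)[OF assms]
  show ?case
  proof (rule breaker_wins.step, intro allI impI conjI)
    fix A assume "A \<subseteq> X - (M \<union> B) \<and> card A = min 2 (card (X - (M \<union> B)))"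
    then have A: "A \<subseteq> X - (M \<union> B)" and "card A \<le> 2" by simp_all
    then have maker_pot: "potential F (M \<union> A) B < 1"
      using less.prems(2) by (intro maker_move_potential_lt_1[OF assms])
    show "\<not> (\<exists>W\<in>F. W \<subseteq> M \<union> A)"
    proof
      assume "\<exists>W\<in>F. W \<subseteq> M \<union> A"
      then obtain W where W: "W \<in> F" "W \<subseteq> M \<union> A" by blast
      moreover have "W \<inter> B = {}" using W(2) less.prems(1) A by blast
      ultimately have "potential F (M \<union> A) B \<ge> 1"
        by (intro potential_ge_1_if_owned[OF finite_F])
      then show False using maker_pot by simp
    qed
    let ?R = "X - (M \<union> A \<union> B)"
    show "?R = {} \<or> (\<exists>e \<in> ?R. breaker_wins X F (M \<union> A) (insert e B))"
    proof (cases "?R = {}")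
      case False
      let ?deg = "degree F (M \<union> A) B"
      have "Max (?deg ` ?R) \<in> ?deg ` ?R" using False assms(1) by (intro Max_in) auto
      then obtain e where e: "e \<in> ?R" and "?deg e = Max (?deg ` ?R)" by (metis imageE)
      then have e_max: "\<forall>a\<in>?R. ?deg a \<le> ?deg e" using assms(1) by simp
      have "card (X - (M \<union> A \<union> insert e B)) < card (X - (M \<union> B))"
        using e assms(1) by (intro psubset_card_mono) auto
      moreover have "safe_position X F (M \<union> A) (insert e B)"
        using maker_pot finite_F e e_max by (intro breaker_move_safe) simp_all
      ultimately have "breaker_wins X F (M \<union> A) (insert e B)"
        using less.prems(1) A e by (intro less.hyps) auto
      then show ?thesis using e by blast
    qed simp
  qed
qed

theorem breaker_wins_if_weight_sum_small:
  assumes "finite X" "F \<subseteq> Pow X" "(\<Sum>W\<in>F. 1 / sqrt 2 ^ card W) < 1 / 2"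
  shows "breaker_wins X F {} {}"
proof (rule breaker_wins_if_safe[OF assms(1,2)])
  note finite_F = finite_family(1)[OF assms(1,2)]
  have pot: "potential F {} {} = (\<Sum>W\<in>F. 1 / sqrt 2 ^ card W)"
    by (simp add: potential_def alive_def weight_def)
  have "potential F {} {} + degree F {} {} a < 1" for a
  proof -
    have "degree F {} {} a \<le> potential F {} {}"
      unfolding degree_def potential_def using finite_F
      by (intro sum_mono2) (auto simp: alive_def weight_nonneg)
    then show ?thesis using assms(3) pot by linarith
  qed
  then show "safe_position X F {} {}"
    unfolding safe_position_def using assms(3) pot by simp
qed simp

lemma board_eq_Sigma: "board n = (SIGMA u:{0..<n}. {0..<n} - {u})"
  by (auto simp: board_def)

lemma card_board: "card (board n) = n * (n - 1)"
  by (simp add: board_eq_Sigma)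

lemma finite_board: "finite (board n)"
  by (simp add: board_eq_Sigma)

lemma tournament_subset_board:
  assumes "tournament k T"
  shows "T \<subseteq> board k"
proof -
  have "T \<subseteq> {0..<k} \<times> {0..<k}" "\<forall>a. (a, a) \<notin> T"
    using assms unfolding tournament_def by blast+
  then show ?thesis by (fastforce simp: board_def)
qed

lemma board_eq_tournament_Un_reversed:
  assumes "tournament k T"
  shows "board k = T \<union> prod.swap ` T"
proof
  show "T \<union> prod.swap ` T \<subseteq> board k"
    using tournament_subset_board[OF assms] by (auto simp: board_def)
  show "board k \<subseteq> T \<union> prod.swap ` T"
  proof
    fix p assume "p \<in> board k"
    then obtain u v where p: "p = (u, v)" "u < k" "v < k" "u \<noteq> v" by (auto simp: board_def)
    then have "(u, v) \<in> T \<or> (v, u) \<in> T" using assms unfolding tournament_def by blast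
    then show "p \<in> T \<union> prod.swap ` T" using p(1) by (auto intro: image_eqI[of _ _ "(v, u)"])
  qed
qed

lemma tournament_disjoint_reversed:
  assumes "tournament k T"
  shows "T \<inter> prod.swap ` T = {}"
proof -
  have "(v, u) \<notin> T" if "(u, v) \<in> T" for u v
  proof -
    have "u < k" "v < k" "u \<noteq> v" using that tournament_subset_board[OF assms] by (auto simp: board_def)
    then show ?thesis using that assms unfolding tournament_def by blast
  qed
  then show ?thesis by auto
qed

lemma card_tournament: "tournament k T \<Longrightarrow> 2 * card T = k * (k - 1)"
proof -
  assume T: "tournament k T"
  have "finite T" using finite_board tournament_subset_board[OF T] by (rule finite_subset[rotated])
  then have "card (board k) = card T + card (prod.swap ` T)"
    using board_eq_tournament_Un_reversed[OF T] tournament_disjoint_reversed[OF T]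
    by (simp add: card_Un_disjoint)
  then show ?thesis by (simp add: card_image card_board)
qed

lemma copies_eq: "copies n k T = {map_prod f f ` T | f. inj_on f {0..<k} \<and> f ` {0..<k} \<subseteq> {0..<n}}"
  by (simp add: copies_def map_prod_def)

lemma copy_subset_board:
  assumes "T \<subseteq> board k" "W \<in> copies n k T"
  shows "W \<subseteq> board n"
proof -
  obtain f where W: "W = map_prod f f ` T" and f: "inj_on f {0..<k}" "f ` {0..<k} \<subseteq> {0..<n}"
    using assms(2) by (auto simp: copies_eq)
  have "(f u, f v) \<in> board n" if "(u, v) \<in> T" for u v
  proof -
    have "u < k" "v < k" "u \<noteq> v" using that assms(1) by (auto simp: board_def)
    moreover from this have "f u \<noteq> f v" using inj_onD[OF f(1)] by fastforce
    ultimately show ?thesis using f(2) by (auto simp: board_def image_subset_iff)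
  qed
  then show ?thesis unfolding W by fastforce
qed

lemma card_copy:
  assumes "T \<subseteq> board k" "W \<in> copies n k T"
  shows "card W = card T"
proof -
  obtain f where W: "W = map_prod f f ` T" and "inj_on f {0..<k}"
    using assms(2) by (auto simp: copies_eq)
  then have "inj_on (map_prod f f) ({0..<k} \<times> {0..<k})" by (intro map_prod_inj_on)
  moreover have "T \<subseteq> {0..<k} \<times> {0..<k}" using assms(1) by (auto simp: board_def)
  ultimately show ?thesis unfolding W by (metis card_image inj_on_subset)
qed

lemma card_copies_le:
  assumes "T \<subseteq> board k"
  shows "card (copies n k T) \<le> n ^ k"
proof -
  have "copies n k T \<subseteq> (\<lambda>f. map_prod f f ` T) ` ({0..<k} \<rightarrow>\<^sub>E {0..<n})"
  proof
    fix W assume "W \<in> copies n k T"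
    then obtain f where f: "W = map_prod f f ` T" "f ` {0..<k} \<subseteq> {0..<n}"
      by (auto simp: copies_eq)
    have "W = map_prod (restrict f {0..<k}) (restrict f {0..<k}) ` T"
      unfolding f(1) using assms by (intro image_cong) (auto simp: board_def)
    moreover have "restrict f {0..<k} \<in> {0..<k} \<rightarrow>\<^sub>E {0..<n}" using f(2) by auto
    ultimately show "W \<in> (\<lambda>f. map_prod f f ` T) ` ({0..<k} \<rightarrow>\<^sub>E {0..<n})" by blast
  qed
  then have "card (copies n k T) \<le> card ((\<lambda>f. map_prod f f ` T) ` ({0..<k} \<rightarrow>\<^sub>E {0..<n}))"
    by (intro card_mono finite_imageI finite_PiE) auto
  also have "\<dots> \<le> card ({0..<k} \<rightarrow>\<^sub>E {0..<n})" by (rule card_image_le) (auto intro: finite_PiE)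
  also have "\<dots> = n ^ k" by (simp add: card_PiE)
  finally show ?thesis .
qed

lemma double_power_lt_sqrt2_power:
  fixes n k c :: nat
  assumes n: "n \<ge> 2" and k: "real k \<ge> 4 * log 2 n + 2" and c: "2 * c = k * (k - 1)"
  shows "2 * real n ^ k < sqrt 2 ^ c"
proof -
  define L where "L = log 2 n"
  have "L \<ge> 1" using n by (simp add: L_def)
  then have "real k \<ge> 6" using k by (simp add: L_def)
  have "real (2 * c) = real k * (real k - 1)" using c \<open>real k \<ge> 6\<close> by (simp add: of_nat_diff)
  moreover have "real k * (real k - 1) \<ge> real k * (4 * L + 1)"
    using k \<open>real k \<ge> 6\<close> by (intro mult_left_mono) (auto simp: L_def)
  ultimately have exponents: "1 + real k * L < real c / 2"
    using \<open>real k \<ge> 6\<close> by (simp add: algebra_simps)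
  have "2 * real n ^ k = 2 powr (1 + real k * L)"
    using n by (simp add: L_def powr_add powr_power[symmetric] mult.commute)
  also have "\<dots> < 2 powr (real c / 2)" using exponents by simp
  also have "\<dots> = sqrt 2 ^ c" by (simp add: powr_half_sqrt[symmetric] powr_power)
  finally show ?thesis .
qed

theorem mainTheorem6:
  shows "\<exists>N. \<forall>n\<ge>N. \<forall>k. real k \<ge> 4 * log 2 (real n) + 2 \<longrightarrow>
           (\<forall>T. tournament k T \<longrightarrow> breaker_wins (board n) (copies n k T) {} {})"
proof (intro exI[of _ 2] allI impI)
  fix n k :: nat and T
  assume n: "2 \<le> n" and k: "4 * log 2 (real n) + 2 \<le> real k" and T: "tournament k T"
  have T_board: "T \<subseteq> board k" by (rule tournament_subset_board[OF T])
  have "(\<Sum>W\<in>copies n k T. 1 / sqrt 2 ^ card W) = card (copies n k T) / sqrt 2 ^ card T"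
    using card_copy[OF T_board] by simp
  also have "\<dots> \<le> n ^ k / sqrt 2 ^ card T"
    using card_copies_le[OF T_board, of n] by (intro divide_right_mono) (simp_all flip: of_nat_power)
  also have "\<dots> < 1 / 2"
    using double_power_lt_sqrt2_power[OF n k card_tournament[OF T]] by (simp add: field_simps)
  finally show "breaker_wins (board n) (copies n k T) {} {}"
    using copy_subset_board[OF T_board] by (intro breaker_wins_if_weight_sum_small finite_board) auto
qed

end
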